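(* Let $\Phi_s,\Phi_b$ be pleasant UCQs over $\Sigma$ and let $D$ be a structure over $\Sigma$ with $\Phi_s\odot D>\Phi_b\odot D$. Then $\mathtt{cq}(\Phi_s)\odot\text{Þ}(D)>\mathtt{cq}(\Phi_b)\odot\text{Þ}(D)$; in particular $\mathtt{cq}(\Phi_s)\not\le_\forall\mathtt{cq}(\Phi_b)$.
   Context: Structures are finite relational structures; constants are interpreted in the vertex set $\mathcal V(D)$. For a CQ $\phi$ and structure $D$, $\phi\odot D$ is the number of maps $h:var(\phi)\to\mathcal V(D)$ sending every atom of $\phi$ (with constants interpreted) to a fact of $D$; for a UCQ $\Phi=\bigvee_j\phi_j$ (pairwise variable-disjoint disjuncts) $\Phi\odot D:=\sum_j\phi_j\odot D$. $\Psi_s\le_\forall\Psi_b$ means $\Psi_s\odot D\le\Psi_b\odot D$ for all structures $D$. A query is pleasant if each atom contains at least one variable. Fix a relational signature $\Sigma$ (possibly with constants) and $\Sigma^+=\Sigma\cup\{V,R,\mathsf{mars},\mathsf{venus}\}$ with $V,R$ fresh binary relations and $\mathsf{mars},\mathsf{venus}$ fresh constants. Let $\mathtt{Good}$ be the variable-free CQ consisting of $V(\mathsf{venus},\mathsf{venus})$, $R(\mathsf{venus},\mathsf{venus})$ and all atoms $A(t_1,\dots,t_k)$ with $A\in\Sigma$, each $t_i$ either $\mathsf{venus}$ or a constant of $\Sigma$, and $\mathsf{venus}$ occurring among the $t_i$ at least once. $\mathtt{Planet}(x):=R(\mathsf{venus},x)\wedge R(x,\mathsf{venus})$. $x\rhd\phi:=\phi\wedge\mathtt{Planet}(x)\wedge\bigwedge_{y\in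 var(\phi)}V(x,y)$. $\mathtt{RClique}_J(x_1,\dots,x_J):=\bigwedge_{j}\mathtt{Planet}(x_j)\wedge\bigwedge_{j<j'}(R(x_j,x_{j'})\wedge R(x_{j'},x_j))$. For a pleasant UCQ $\Phi=\bigvee_{j=1}^J\phi_j$ over $\Sigma$, $\mathtt{cq}(\Phi):=\mathtt{RClique}_J(x_1,\dots,x_J)\wedge\bigwedge_{j=1}^J(x_j\rhd\phi_j)$ with fresh variables $x_1,\dots,x_J$. The marsification $\text{Þ}(D)$ of a structure $D$ over $\Sigma$ is the structure over $\Sigma^+$ whose elements are those of $D$ together with two new distinct elements interpreting $\mathsf{mars}$ and $\mathsf{venus}$, and whose facts are: all atoms of $\mathtt{Good}\wedge\mathtt{Planet}(\mathsf{mars})$, all facts of $D$, and $V(\mathsf{mars},a)$ for every $a\in\mathcal V(D)$. *)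

theory Defs
  imports Main "HOL-Library.FuncSet"
begin

text \<open>A relational signature is given by a set of relation symbols Rs with an
arity function ar, and a set of constant symbols Cs.\<close>

datatype ('v, 'c) trm = Var 'v | Const 'c

type_synonym ('r, 'v, 'c) atom = "'r \<times> ('v, 'c) trm list"

type_synonym ('r, 'v, 'c) cq = "('r, 'v, 'c) atom set"
type_synonym ('r, 'v, 'c) ucq = "('r, 'v, 'c) cq list"

fun trm_vars :: "('v, 'c) trm \<Rightarrow> 'v set" where
  "trm_vars (Var v) = {v}"
| "trm_vars (Const c) = {}"

definition atom_vars :: "('r, 'v, 'c) atom \<Rightarrow> 'v set" where
  "atom_vars a = (\<Union>t\<in>set (snd a). trm_vars t)"

definition cq_vars :: "('r, 'v, 'c) cq \<Rightarrow> 'v set" where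
  "cq_vars \<phi> = (\<Union>a\<in>\<phi>. atom_vars a)"

record ('r, 'c, 'e) rstruct =
  dom :: "'e set"
  cint :: "'c \<Rightarrow> 'e"
  facts :: "('r \<times> 'e list) set"

definition struct_over :: "'r set \<Rightarrow> ('r \<Rightarrow> nat) \<Rightarrow> 'c set \<Rightarrow> ('r, 'c, 'e) rstruct \<Rightarrow> bool" where
  "struct_over Rs ar Cs D \<longleftrightarrow>
     finite (dom D) \<and> (\<forall>c\<in>Cs. cint D c \<in> dom D) \<and>
     (\<forall>(A, es)\<in>facts D. A \<in> Rs \<and> length es = ar A \<and> set es \<subseteq> dom D)"

definition atom_over :: "'r set \<Rightarrow> ('r \<Rightarrow> nat) \<Rightarrow> 'c set \<Rightarrow> ('r, 'v, 'c) atom \<Rightarrow> bool" where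
  "atom_over Rs ar Cs a \<longleftrightarrow>
     fst a \<in> Rs \<and> length (snd a) = ar (fst a) \<and> (\<forall>c. Const c \<in> set (snd a) \<longrightarrow> c \<in> Cs)"

definition cq_over :: "'r set \<Rightarrow> ('r \<Rightarrow> nat) \<Rightarrow> 'c set \<Rightarrow> ('r, 'v, 'c) cq \<Rightarrow> bool" where
  "cq_over Rs ar Cs \<phi> \<longleftrightarrow> finite \<phi> \<and> (\<forall>a\<in>\<phi>. atom_over Rs ar Cs a)"

definition pleasant_cq :: "('r, 'v, 'c) cq \<Rightarrow> bool" where
  "pleasant_cq \<phi> \<longleftrightarrow> (\<forall>a\<in>\<phi>. atom_vars a \<noteq> {})"

definition ucq_over :: "'r set \<Rightarrow> ('r \<Rightarrow> nat) \<Rightarrow> 'c set \<Rightarrow> ('r, 'v, 'c) ucq \<Rightarrow> bool" where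
  "ucq_over Rs ar Cs \<Phi> \<longleftrightarrow>
     (\<forall>\<phi>\<in>set \<Phi>. cq_over Rs ar Cs \<phi>) \<and>
     (\<forall>i j. i < length \<Phi> \<and> j < length \<Phi> \<and> i \<noteq> j \<longrightarrow> cq_vars (\<Phi> ! i) \<inter> cq_vars (\<Phi> ! j) = {})"

definition pleasant_ucq :: "('r, 'v, 'c) ucq \<Rightarrow> bool" where
  "pleasant_ucq \<Phi> \<longleftrightarrow> (\<forall>\<phi>\<in>set \<Phi>. pleasant_cq \<phi>)"

fun eval_trm :: "('c \<Rightarrow> 'e) \<Rightarrow> ('v \<Rightarrow> 'e) \<Rightarrow> ('v, 'c) trm \<Rightarrow> 'e" where
  "eval_trm ci h (Var v) = h v"
| "eval_trm ci h (Const c) = ci c"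

definition eval_atom :: "('c \<Rightarrow> 'e) \<Rightarrow> ('v \<Rightarrow> 'e) \<Rightarrow> ('r, 'v, 'c) atom \<Rightarrow> 'r \<times> 'e list" where
  "eval_atom ci h a = (fst a, map (eval_trm ci h) (snd a))"

definition hcount :: "('r, 'v, 'c) cq \<Rightarrow> ('r, 'c, 'e, 'z) rstruct_scheme \<Rightarrow> nat" where
  "hcount \<phi> D = card {h \<in> cq_vars \<phi> \<rightarrow>\<^sub>E dom D. \<forall>a\<in>\<phi>. eval_atom (cint D) h a \<in> facts D}"

definition ucount :: "('r, 'v, 'c) ucq \<Rightarrow> ('r, 'c, 'e, 'z) rstruct_scheme \<Rightarrow> nat" where
  "ucount \<Phi> D = (\<Sum>\<phi>\<leftarrow>\<Phi>. hcount \<phi> D)"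

datatype 'r rsym = Rel 'r | SymV | SymR
datatype 'c csym = Cst 'c | Mars | Venus

definition Rs_plus :: "'r set \<Rightarrow> 'r rsym set" where
  "Rs_plus Rs = Rel ` Rs \<union> {SymV, SymR}"

fun ar_plus :: "('r \<Rightarrow> nat) \<Rightarrow> 'r rsym \<Rightarrow> nat" where
  "ar_plus ar (Rel A) = ar A"
| "ar_plus ar SymV = 2"
| "ar_plus ar SymR = 2"

definition Cs_plus :: "'c set \<Rightarrow> 'c csym set" where
  "Cs_plus Cs = Cst ` Cs \<union> {Mars, Venus}"

text \<open>\<Psi>s \<le>\<forall> \<Psi>b over \<Sigma>+, quantifying over all structures (of element type 'e).\<close>
definition le_forall :: "'e itself \<Rightarrow> 'r set \<Rightarrow> ('r \<Rightarrow> nat) \<Rightarrow> 'c set \<Rightarrow>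
    ('r rsym, 'v, 'c csym) cq \<Rightarrow> ('r rsym, 'v, 'c csym) cq \<Rightarrow> bool" where
  "le_forall _ Rs ar Cs \<Psi>s \<Psi>b \<longleftrightarrow>
     (\<forall>D :: ('r rsym, 'c csym, 'e) rstruct.
        struct_over (Rs_plus Rs) (ar_plus ar) (Cs_plus Cs) D \<longrightarrow> hcount \<Psi>s D \<le> hcount \<Psi>b D)"

definition Good :: "'r set \<Rightarrow> ('r \<Rightarrow> nat) \<Rightarrow> 'c set \<Rightarrow> ('r rsym, 'v, 'c csym) cq" where
  "Good Rs ar Cs =
     {(SymV, [Const Venus, Const Venus]), (SymR, [Const Venus, Const Venus])} \<union>
     {(Rel A, ts) | A ts. A \<in> Rs \<and> length ts = ar A \<and>
        set ts \<subseteq> {Const Venus} \<union> (Const \<circ> Cst) ` Cs \<and> Const Venus \<in> set ts}"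

definition Planet :: "('v, 'c csym) trm \<Rightarrow> ('r rsym, 'v, 'c csym) cq" where
  "Planet x = {(SymR, [Const Venus, x]), (SymR, [x, Const Venus])}"

fun lift_trm :: "('v, 'c) trm \<Rightarrow> ('v + nat, 'c csym) trm" where
  "lift_trm (Var v) = Var (Inl v)"
| "lift_trm (Const c) = Const (Cst c)"

definition lift_cq :: "('r, 'v, 'c) cq \<Rightarrow> ('r rsym, 'v + nat, 'c csym) cq" where
  "lift_cq \<phi> = (\<lambda>(A, ts). (Rel A, map lift_trm ts)) ` \<phi>"

definition rhd :: "('v + nat, 'c csym) trm \<Rightarrow> ('r, 'v, 'c) cq \<Rightarrow> ('r rsym, 'v + nat, 'c csym) cq" where
  "rhd x \<phi> = lift_cq \<phi> \<union> Planet x \<union> {(SymV, [x, Var (Inl y)]) | y. y \<in> cq_vars \<phi>}"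

text \<open>The fresh variables x_1, ..., x_J are Var (Inr 0), ..., Var (Inr (J-1)).\<close>
abbreviation xv :: "nat \<Rightarrow> ('v + nat, 'c csym) trm" where
  "xv j \<equiv> Var (Inr j)"

definition RClique :: "nat \<Rightarrow> ('r rsym, 'v + nat, 'c csym) cq" where
  "RClique J = (\<Union>j<J. Planet (xv j)) \<union>
     (\<Union>j<J. \<Union>j'<J. if j < j' then {(SymR, [xv j, xv j']), (SymR, [xv j', xv j])} else {})"

definition cqOf :: "('r, 'v, 'c) ucq \<Rightarrow> ('r rsym, 'v + nat, 'c csym) cq" where
  "cqOf \<Phi> = RClique (length \<Phi>) \<union> (\<Union>j<length \<Phi>. rhd (xv j) (\<Phi> ! j))"

datatype 'e pelem = Old 'e | MarsE | VenusE

fun pcint :: "('c \<Rightarrow> 'e) \<Rightarrow> 'c csym \<Rightarrow> 'e pelem" where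
  "pcint ci (Cst c) = Old (ci c)"
| "pcint ci Mars = MarsE"
| "pcint ci Venus = VenusE"

definition marsify :: "'r set \<Rightarrow> ('r \<Rightarrow> nat) \<Rightarrow> 'c set \<Rightarrow> ('r, 'c, 'e) rstruct
    \<Rightarrow> ('r rsym, 'c csym, 'e pelem) rstruct" where
  "marsify Rs ar Cs D =
     \<lparr> dom = Old ` dom D \<union> {MarsE, VenusE},
       cint = pcint (cint D),
       facts = eval_atom (pcint (cint D)) (\<lambda>_. undefined)
                 ` (Good Rs ar Cs \<union> Planet (Const Mars) :: ('r rsym, unit, 'c csym) cq)
               \<union> {(Rel A, map Old es) | A es. (A, es) \<in> facts D}
               \<union> {(SymV, [MarsE, Old a]) | a. a \<in> dom D} \<rparr>"

end

theory Submission
  imports Defs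
begin

text \<open>Every homomorphism from cq(\<Phi>) into the marsification of D sends each x_j to venus
  or to mars (the Planet atoms), and at most one of them to mars (the R-clique, as R(mars, mars) is
  not a fact). If no x_j goes to mars, the atoms V(x_j, y) force every variable to venus, so there
  is exactly one such homomorphism. If x_k goes to mars, the atoms V(mars, y) force the variables of
  \<phi>_k into D, where they form a homomorphism of \<phi>_k; all other variables must go to venus,
  and this is always allowed because a pleasant atom sent entirely to venus becomes an atom of Good.
  Hence cq(\<Phi>) has exactly 1 + \<Phi> \<odot> D homomorphisms into the marsification, and the
  strict inequality survives the translation.\<close>

lemma RClique_eq:
  "RClique J = (\<Union>j<J. Planet (xv j)) \<union> {(SymR, [xv j, xv j']) | j j'. j < J \<and> j' < J \<and> j \<noteq> j'}"
  unfolding RClique_def by (auto simp: neq_iff split: if_splits)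

lemma cqOf_eq:
  "cqOf \<Phi> = (\<Union>j<length \<Phi>. Planet (xv j))
     \<union> {(SymR, [xv j, xv j']) | j j'. j < length \<Phi> \<and> j' < length \<Phi> \<and> j \<noteq> j'}
     \<union> {(SymV, [xv j, Var (Inl y)]) | j y. j < length \<Phi> \<and> y \<in> cq_vars (\<Phi> ! j)}
     \<union> {(Rel A, map lift_trm ts) | j A ts. j < length \<Phi> \<and> (A, ts) \<in> \<Phi> ! j}"
  unfolding cqOf_def RClique_eq rhd_def lift_cq_def by auto

lemma trm_vars_lift_trm: "trm_vars (lift_trm t) = Inl ` trm_vars t"
  by (cases t) auto

lemma in_cq_varsI: "a \<in> \<phi> \<Longrightarrow> v \<in> atom_vars a \<Longrightarrow> v \<in> cq_vars \<phi>"
  unfolding cq_vars_def by blast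

lemma cq_vars_Un: "cq_vars (\<phi> \<union> \<psi>) = cq_vars \<phi> \<union> cq_vars \<psi>"
  by (simp add: cq_vars_def)

lemma cq_vars_cqOf:
  fixes \<Phi> :: "('r, 'v, 'c) ucq"
  shows "cq_vars (cqOf \<Phi>) = Inr ` {..<length \<Phi>} \<union> Inl ` (\<Union>j<length \<Phi>. cq_vars (\<Phi> ! j))"
proof -
  let ?X = "Inr ` {..<length \<Phi>} :: ('v + nat) set"
  let ?Y = "Inl ` (\<Union>j<length \<Phi>. cq_vars (\<Phi> ! j)) :: ('v + nat) set"
  have planets: "cq_vars (\<Union>j<length \<Phi>. Planet (xv j)) = ?X"
    by (auto simp: cq_vars_def atom_vars_def Planet_def)
  have clique: "cq_vars {(SymR, [xv j, xv j']) | j j'. j < length \<Phi> \<and> j' < length \<Phi> \<and> j \<noteq> j'} \<subseteq> ?X"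
    by (auto simp: cq_vars_def atom_vars_def)
  have V: "cq_vars {(SymV, [xv j, Var (Inl y)]) | j y. j < length \<Phi> \<and> y \<in> cq_vars (\<Phi> ! j)}
      \<subseteq> ?X \<union> ?Y"
    by (force simp: cq_vars_def atom_vars_def)
  have lifted: "cq_vars {(Rel A, map lift_trm ts) | j A ts. j < length \<Phi> \<and> (A, ts) \<in> \<Phi> ! j} = ?Y"
    by (fastforce simp: cq_vars_def atom_vars_def trm_vars_lift_trm)
  show ?thesis
    unfolding cqOf_eq cq_vars_Un planets lifted using clique V by auto
qed

lemma finite_trm_vars: "finite (trm_vars t)"
  by (cases t) auto

lemma finite_cq_vars: "cq_over Rs ar Cs \<phi> \<Longrightarrow> finite (cq_vars \<phi>)"
  by (auto simp: cq_over_def cq_vars_def atom_vars_def finite_trm_vars)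

lemma cq_vars_cqOf_cases:
  fixes \<Phi> :: "('r, 'v, 'c) ucq"
  assumes "x \<in> cq_vars (cqOf \<Phi>)"
  obtains (Inr) j where "j < length \<Phi>" and "x = Inr j"
  | (Inl) j v where "j < length \<Phi>" and "v \<in> cq_vars (\<Phi> ! j)" and "x = Inl v"
  using assms unfolding cq_vars_cqOf by blast

definition hom_set :: "('r, 'v, 'c) cq \<Rightarrow> ('r, 'c, 'e, 'z) rstruct_scheme \<Rightarrow> ('v \<Rightarrow> 'e) set" where
  "hom_set \<phi> D = {h \<in> cq_vars \<phi> \<rightarrow>\<^sub>E dom D. \<forall>a\<in>\<phi>. eval_atom (cint D) h a \<in> facts D}"

lemma hcount_eq_card_hom_set: "hcount \<phi> D = card (hom_set \<phi> D)"
  by (simp add: hcount_def hom_set_def)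

lemma finite_hom_set: "finite (cq_vars \<phi>) \<Longrightarrow> finite (dom D) \<Longrightarrow> finite (hom_set \<phi> D)"
  unfolding hom_set_def by (rule finite_subset[OF _ finite_PiE]) auto

lemma eval_cqOf_in_facts_iff:
  "(\<forall>a\<in>cqOf \<Phi>. eval_atom ci h a \<in> F) \<longleftrightarrow>
     (\<forall>j<length \<Phi>. (SymR, [ci Venus, h (Inr j)]) \<in> F \<and> (SymR, [h (Inr j), ci Venus]) \<in> F) \<and>
     (\<forall>j<length \<Phi>. \<forall>j'<length \<Phi>. j \<noteq> j' \<longrightarrow> (SymR, [h (Inr j), h (Inr j')]) \<in> F) \<and>
     (\<forall>j<length \<Phi>. \<forall>y\<in>cq_vars (\<Phi> ! j). (SymV, [h (Inr j), h (Inl y)]) \<in> F) \<and>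
     (\<forall>j<length \<Phi>. \<forall>A ts. (A, ts) \<in> \<Phi> ! j \<longrightarrow> (Rel A, map (eval_trm ci h \<circ> lift_trm) ts) \<in> F)"
  (is "?all \<longleftrightarrow> ?planets \<and> ?clique \<and> ?V \<and> ?Rel")
proof
  assume ?all
  then have atom: "(fst a, map (eval_trm ci h) (snd a)) \<in> F" if "a \<in> cqOf \<Phi>" for a
    using that by (auto simp: eval_atom_def)
  have ?planets
    using atom[of "(SymR, [Const Venus, xv _])"] atom[of "(SymR, [xv _, Const Venus])"]
    by (simp add: cqOf_eq Planet_def)
  moreover have ?clique
    using atom[of "(SymR, [xv _, xv _])"] by (simp add: cqOf_eq)
  moreover have ?V
    using atom[of "(SymV, [xv _, Var (Inl _)])"] by (simp add: cqOf_eq)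
  moreover have ?Rel
    using atom[of "(Rel _, map lift_trm _)"] by (simp add: cqOf_eq) blast
  ultimately show "?planets \<and> ?clique \<and> ?V \<and> ?Rel"
    by blast
qed (auto simp: cqOf_eq Planet_def eval_atom_def)

lemma dom_marsify: "dom (marsify Rs ar Cs D) = Old ` dom D \<union> {MarsE, VenusE}"
  by (simp add: marsify_def)

lemma cint_marsify: "cint (marsify Rs ar Cs D) = pcint (cint D)"
  by (simp add: marsify_def)

lemma SymR_in_facts_marsify_iff:
  "(SymR, [a, b]) \<in> facts (marsify Rs ar Cs D) \<longleftrightarrow>
     (a = VenusE \<and> (b = VenusE \<or> b = MarsE)) \<or> (a = MarsE \<and> b = VenusE)"
  by (force simp: marsify_def Good_def Planet_def eval_atom_def)

lemma SymV_in_facts_marsify_iff: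
  "(SymV, [a, b]) \<in> facts (marsify Rs ar Cs D) \<longleftrightarrow>
     (a = VenusE \<and> b = VenusE) \<or> (a = MarsE \<and> b \<in> Old ` dom D)"
  by (force simp: marsify_def Good_def Planet_def eval_atom_def)

lemma Rel_Old_in_facts_marsify_iff:
  "(Rel A, map Old es) \<in> facts (marsify Rs ar Cs D) \<longleftrightarrow> (A, es) \<in> facts D"
proof
  assume fact: "(Rel A, map Old es) \<in> facts (marsify Rs ar Cs D)"
  let ?eval = "eval_atom (pcint (cint D)) (\<lambda>_::unit. undefined)"
  have "(Rel A, map Old es) \<notin> ?eval ` (Good Rs ar Cs \<union> Planet (Const Mars))"
  proof
    assume "(Rel A, map Old es) \<in> ?eval ` (Good Rs ar Cs \<union> Planet (Const Mars))"
    then obtain ts where "Const Venus \<in> set ts"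
      and "map Old es = map (eval_trm (pcint (cint D)) (\<lambda>_::unit. undefined)) ts"
      by (auto simp: Good_def Planet_def eval_atom_def)
    then have "VenusE \<in> set (map Old es)"
      by force
    then show False
      by auto
  qed
  moreover have inj: "inj Old"
    by (simp add: inj_def)
  ultimately show "(A, es) \<in> facts D"
    using fact by (auto simp: marsify_def inj_map_eq_map[OF inj])
qed (auto simp: marsify_def)

lemma eval_lift_trm_Old:
  "\<forall>v\<in>trm_vars t. h (Inl v) = Old (g v) \<Longrightarrow> eval_trm (pcint ci) h (lift_trm t) = Old (eval_trm ci g t)"
  by (cases t) auto

lemma Rel_lift_in_facts_marsify_iff:
  assumes "\<forall>v\<in>atom_vars (A, ts). h (Inl v) = Old (g v)"
  shows "(Rel A, map (eval_trm (pcint (cint D)) h \<circ> lift_trm) ts) \<in> facts (marsify Rs ar Cs D)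
    \<longleftrightarrow> eval_atom (cint D) g (A, ts) \<in> facts D"
proof -
  have "map (eval_trm (pcint (cint D)) h \<circ> lift_trm) ts = map Old (map (eval_trm (cint D) g) ts)"
    using assms by (auto simp: atom_vars_def eval_lift_trm_Old)
  then show ?thesis
    by (metis Rel_Old_in_facts_marsify_iff eval_atom_def fst_conv snd_conv)
qed

fun venus_trm :: "('v, 'c) trm \<Rightarrow> (unit, 'c csym) trm" where
  "venus_trm (Var v) = Const Venus"
| "venus_trm (Const c) = Const (Cst c)"

lemma eval_lift_trm_venus:
  "\<forall>v\<in>trm_vars t. h (Inl v) = VenusE \<Longrightarrow>
     eval_trm (pcint ci) h (lift_trm t) = eval_trm (pcint ci) (\<lambda>_::unit. undefined) (venus_trm t)"
  by (cases t) auto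

lemma Rel_venus_in_facts_marsify:
  assumes "atom_over Rs ar Cs (A, ts)" and "atom_vars (A, ts) \<noteq> {}"
    and "\<forall>v\<in>atom_vars (A, ts). h (Inl v) = VenusE"
  shows "(Rel A, map (eval_trm (pcint (cint D)) h \<circ> lift_trm) ts) \<in> facts (marsify Rs ar Cs D)"
proof -
  have good: "(Rel A, map venus_trm ts) \<in> Good Rs ar Cs"
  proof -
    have "set (map venus_trm ts) \<subseteq> {Const Venus} \<union> (Const \<circ> Cst) ` Cs"
    proof
      fix s assume "s \<in> set (map venus_trm ts)"
      then obtain t where t: "t \<in> set ts" "s = venus_trm t"
        by auto
      show "s \<in> {Const Venus} \<union> (Const \<circ> Cst) ` Cs"
        using assms(1) t by (cases t) (auto simp: atom_over_def)
    qed
    moreover have "Const Venus \<in> set (map venus_trm ts)"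
    proof -
      obtain t v where t: "t \<in> set ts" "v \<in> trm_vars t"
        using assms(2) by (auto simp: atom_vars_def)
      from t(2) have "venus_trm t = Const Venus"
        by (cases t) auto
      with t show ?thesis
        by force
    qed
    ultimately show ?thesis
      using assms(1) by (auto simp: Good_def atom_over_def)
  qed
  have "eval_atom (pcint (cint D)) (\<lambda>_::unit. undefined) (Rel A, map venus_trm ts)
      \<in> facts (marsify Rs ar Cs D)"
    using good by (simp add: marsify_def)
  moreover have "map (eval_trm (pcint (cint D)) h \<circ> lift_trm) ts
      = map (eval_trm (pcint (cint D)) (\<lambda>_::unit. undefined) \<circ> venus_trm) ts"
    using assms(3) by (auto simp: atom_vars_def eval_lift_trm_venus)
  ultimately show ?thesis
    by (metis eval_atom_def fst_conv snd_conv map_map)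
qed

lemma struct_over_marsify:
  assumes D: "struct_over Rs ar Cs D"
  shows "struct_over (Rs_plus Rs) (ar_plus ar) (Cs_plus Cs) (marsify Rs ar Cs D)"
proof -
  let ?M = "marsify Rs ar Cs D"
  let ?well_formed = "\<lambda>(A, es). A \<in> Rs_plus Rs \<and> length es = ar_plus ar A \<and> set es \<subseteq> dom ?M"
  let ?eval = "eval_atom (pcint (cint D)) (\<lambda>_::unit. undefined)"
  have const_in_dom: "cint D c \<in> dom D" if "c \<in> Cs" for c
    using D that by (simp add: struct_over_def)
  have "\<forall>f\<in>?eval ` Planet (Const Mars). ?well_formed f"
    by (auto simp: Planet_def eval_atom_def Rs_plus_def dom_marsify)
  moreover have "\<forall>f\<in>?eval ` Good Rs ar Cs. ?well_formed f"
    using const_in_dom by (fastforce simp: Good_def eval_atom_def Rs_plus_def dom_marsify)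
  moreover have "\<forall>f\<in>{(Rel A, map Old es) | A es. (A, es) \<in> facts D}. ?well_formed f"
    using D by (fastforce simp: struct_over_def Rs_plus_def dom_marsify)
  moreover have "\<forall>f\<in>{(SymV, [MarsE, Old a]) | a. a \<in> dom D}. ?well_formed f"
    by (auto simp: Rs_plus_def dom_marsify)
  ultimately have "\<forall>f\<in>facts ?M. ?well_formed f"
    unfolding marsify_def by (simp only: rstruct.simps image_Un ball_Un)
  then show ?thesis
    using D const_in_dom by (auto simp: struct_over_def dom_marsify cint_marsify Cs_plus_def)
qed

lemma hom_set_cqOf_marsify_iff:
  fixes \<Phi> :: "('r, 'v, 'c) ucq" and D :: "('r, 'c, 'e) rstruct"
  shows "h \<in> hom_set (cqOf \<Phi>) (marsify Rs ar Cs D) \<longleftrightarrow>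
     h \<in> cq_vars (cqOf \<Phi>) \<rightarrow>\<^sub>E Old ` dom D \<union> {MarsE, VenusE} \<and>
     (\<forall>j<length \<Phi>. h (Inr j) = VenusE \<or> h (Inr j) = MarsE) \<and>
     (\<forall>j<length \<Phi>. \<forall>j'<length \<Phi>. j \<noteq> j' \<longrightarrow> h (Inr j) \<noteq> MarsE \<or> h (Inr j') \<noteq> MarsE) \<and>
     (\<forall>j<length \<Phi>. \<forall>y\<in>cq_vars (\<Phi> ! j).
        (h (Inr j) = VenusE \<and> h (Inl y) = VenusE) \<or> (h (Inr j) = MarsE \<and> h (Inl y) \<in> Old ` dom D)) \<and>
     (\<forall>j<length \<Phi>. \<forall>A ts. (A, ts) \<in> \<Phi> ! j \<longrightarrow>
        (Rel A, map (eval_trm (pcint (cint D)) h \<circ> lift_trm) ts) \<in> facts (marsify Rs ar Cs D))"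
proof -
  let ?F = "facts (marsify Rs ar Cs D)"
  have planet: "(SymR, [VenusE, x]) \<in> ?F \<and> (SymR, [x, VenusE]) \<in> ?F \<longleftrightarrow> x = VenusE \<or> x = MarsE"
    for x :: "'e pelem"
    by (auto simp: SymR_in_facts_marsify_iff)
  have clique: "(SymR, [x, y]) \<in> ?F \<longleftrightarrow> x \<noteq> MarsE \<or> y \<noteq> MarsE"
    if "x = VenusE \<or> x = MarsE" and "y = VenusE \<or> y = MarsE" for x y :: "'e pelem"
    using that by (auto simp: SymR_in_facts_marsify_iff)
  show ?thesis
    unfolding hom_set_def mem_Collect_eq eval_cqOf_in_facts_iff dom_marsify cint_marsify pcint.simps
      planet SymV_in_facts_marsify_iff
    by (intro conj_cong refl) (auto simp: clique)
qed

lemma hom_set_cqOf_marsifyD: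
  fixes D :: "('r, 'c, 'e) rstruct"
  assumes "h \<in> hom_set (cqOf \<Phi>) (marsify Rs ar Cs D)" and "j < length \<Phi>"
  shows "h (Inr j) = VenusE \<or> h (Inr j) = MarsE"
    and "j' < length \<Phi> \<Longrightarrow> j \<noteq> j' \<Longrightarrow> h (Inr j) \<noteq> MarsE \<or> h (Inr j') \<noteq> MarsE"
    and "y \<in> cq_vars (\<Phi> ! j) \<Longrightarrow>
      (h (Inr j) = VenusE \<and> h (Inl y) = VenusE) \<or> (h (Inr j) = MarsE \<and> h (Inl y) \<in> Old ` dom D)"
    and "(A, ts) \<in> \<Phi> ! j \<Longrightarrow>
      (Rel A, map (eval_trm (pcint (cint D)) h \<circ> lift_trm) ts) \<in> facts (marsify Rs ar Cs D)"
  using assms unfolding hom_set_cqOf_marsify_iff by simp_all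

definition venus_hom :: "('r, 'v, 'c) ucq \<Rightarrow> 'v + nat \<Rightarrow> 'e pelem" where
  "venus_hom \<Phi> = (\<lambda>x\<in>cq_vars (cqOf \<Phi>). VenusE)"

definition mars_hom :: "('r, 'v, 'c) ucq \<Rightarrow> nat \<Rightarrow> ('v \<Rightarrow> 'e) \<Rightarrow> 'v + nat \<Rightarrow> 'e pelem" where
  "mars_hom \<Phi> k g = (\<lambda>x\<in>cq_vars (cqOf \<Phi>). case x of
       Inr j \<Rightarrow> if j = k then MarsE else VenusE
     | Inl v \<Rightarrow> if v \<in> cq_vars (\<Phi> ! k) then Old (g v) else VenusE)"

lemma venus_hom_Inr: "j < length \<Phi> \<Longrightarrow> venus_hom \<Phi> (Inr j) = VenusE"
  by (simp add: venus_hom_def cq_vars_cqOf)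

lemma venus_hom_Inl: "j < length \<Phi> \<Longrightarrow> v \<in> cq_vars (\<Phi> ! j) \<Longrightarrow> venus_hom \<Phi> (Inl v) = VenusE"
  by (auto simp: venus_hom_def cq_vars_cqOf)

lemma mars_hom_Inr: "j < length \<Phi> \<Longrightarrow> mars_hom \<Phi> k g (Inr j) = (if j = k then MarsE else VenusE)"
  by (simp add: mars_hom_def cq_vars_cqOf)

lemma mars_hom_Inl:
  "j < length \<Phi> \<Longrightarrow> v \<in> cq_vars (\<Phi> ! j) \<Longrightarrow>
     mars_hom \<Phi> k g (Inl v) = (if v \<in> cq_vars (\<Phi> ! k) then Old (g v) else VenusE)"
  by (auto simp: mars_hom_def cq_vars_cqOf)

lemma inj_on_mars_hom:
  "k < length \<Phi> \<Longrightarrow> inj_on (mars_hom \<Phi> k) (cq_vars (\<Phi> ! k) \<rightarrow>\<^sub>E A)"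
proof (rule inj_onI)
  fix g g' assume k: "k < length \<Phi>"
    and g: "g \<in> cq_vars (\<Phi> ! k) \<rightarrow>\<^sub>E A" "g' \<in> cq_vars (\<Phi> ! k) \<rightarrow>\<^sub>E A"
    and eq: "mars_hom \<Phi> k g = mars_hom \<Phi> k g'"
  show "g = g'"
  proof (rule PiE_ext[OF g])
    fix v assume "v \<in> cq_vars (\<Phi> ! k)"
    then show "g v = g' v"
      using fun_cong[OF eq, of "Inl v"] k by (simp add: mars_hom_Inl)
  qed
qed

lemma hom_without_mars_eq_venus_hom:
  fixes D :: "('r, 'c, 'e) rstruct"
  assumes h: "h \<in> hom_set (cqOf \<Phi>) (marsify Rs ar Cs D)"
    and no_mars: "\<forall>j<length \<Phi>. h (Inr j) \<noteq> MarsE"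
  shows "h = venus_hom \<Phi>"
proof (rule extensionalityI)
  have venus: "h (Inr j) = VenusE" if "j < length \<Phi>" for j
    using hom_set_cqOf_marsifyD(1)[OF h that] no_mars that by blast
  show "h \<in> extensional (cq_vars (cqOf \<Phi>))"
    using h by (auto simp: hom_set_def PiE_iff)
  show "venus_hom \<Phi> \<in> extensional (cq_vars (cqOf \<Phi>))"
    by (simp add: venus_hom_def)
  fix x assume "x \<in> cq_vars (cqOf \<Phi>)"
  then show "h x = venus_hom \<Phi> x"
  proof (cases rule: cq_vars_cqOf_cases)
    case (Inr j)
    then show ?thesis
      using venus by (simp add: venus_hom_Inr)
  next
    case (Inl j v)
    then show ?thesis
      using hom_set_cqOf_marsifyD(3)[OF h Inl(1,2)] venus[OF Inl(1)]
      by (simp add: venus_hom_Inl)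
  qed
qed

lemma hom_with_mars_eq_mars_hom:
  fixes D :: "('r, 'c, 'e) rstruct"
  assumes h: "h \<in> hom_set (cqOf \<Phi>) (marsify Rs ar Cs D)"
    and k: "k < length \<Phi>" and mars: "h (Inr k) = MarsE"
  shows "\<exists>g\<in>hom_set (\<Phi> ! k) D. h = mars_hom \<Phi> k g"
proof -
  have others: "h (Inr j) = VenusE" if "j < length \<Phi>" and "j \<noteq> k" for j
    using hom_set_cqOf_marsifyD(1)[OF h that(1)] hom_set_cqOf_marsifyD(2)[OF h that(1) k that(2)]
      mars by blast
  define g where "g = restrict (\<lambda>v. inv Old (h (Inl v))) (cq_vars (\<Phi> ! k))"
  have h_Inl: "h (Inl v) = Old (g v) \<and> g v \<in> dom D" if v: "v \<in> cq_vars (\<Phi> ! k)" for v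
  proof -
    obtain e where "e \<in> dom D" and "h (Inl v) = Old e"
      using hom_set_cqOf_marsifyD(3)[OF h k v] mars by auto
    moreover have "inv Old (Old e) = e"
      by (rule inv_f_f) (simp add: inj_def)
    ultimately show ?thesis
      using v by (simp add: g_def)
  qed
  have "g \<in> hom_set (\<Phi> ! k) D"
    unfolding hom_set_def
  proof (intro CollectI conjI ballI)
    show "g \<in> cq_vars (\<Phi> ! k) \<rightarrow>\<^sub>E dom D"
      using h_Inl by (simp add: g_def)
    fix a assume a: "a \<in> \<Phi> ! k"
    obtain A ts where a_eq: "a = (A, ts)"
      by fastforce
    have "\<forall>v\<in>atom_vars (A, ts). h (Inl v) = Old (g v)"
      using h_Inl in_cq_varsI[OF a] a_eq by blast
    then show "eval_atom (cint D) g a \<in> facts D"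
      using hom_set_cqOf_marsifyD(4)[OF h k a[unfolded a_eq]] a_eq
      by (simp add: Rel_lift_in_facts_marsify_iff[where g = g])
  qed
  moreover have "h = mars_hom \<Phi> k g"
  proof (rule extensionalityI)
    show "h \<in> extensional (cq_vars (cqOf \<Phi>))"
      using h by (auto simp: hom_set_def PiE_iff)
    show "mars_hom \<Phi> k g \<in> extensional (cq_vars (cqOf \<Phi>))"
      by (simp add: mars_hom_def)
    fix x assume "x \<in> cq_vars (cqOf \<Phi>)"
    then show "h x = mars_hom \<Phi> k g x"
    proof (cases rule: cq_vars_cqOf_cases)
      case (Inr j)
      then show ?thesis
        using mars others by (auto simp: mars_hom_Inr)
    next
      case (Inl j v)
      show ?thesis
      proof (cases "v \<in> cq_vars (\<Phi> ! k)")
        case True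
        then show ?thesis
          using Inl h_Inl by (simp add: mars_hom_Inl)
      next
        case False
        then have "h (Inr j) = VenusE"
          using Inl others by blast
        then show ?thesis
          using hom_set_cqOf_marsifyD(3)[OF h Inl(1,2)] Inl False by (simp add: mars_hom_Inl)
      qed
    qed
  qed
  ultimately show ?thesis
    by blast
qed

context
  fixes Rs :: "'r set" and ar :: "'r \<Rightarrow> nat" and Cs :: "'c set" and \<Phi> :: "('r, 'v, 'c) ucq"
  assumes ucq: "ucq_over Rs ar Cs \<Phi>" and pleasant: "pleasant_ucq \<Phi>"
begin

lemma disjunct_atom:
  assumes "j < length \<Phi>" and "a \<in> \<Phi> ! j"
  shows "atom_over Rs ar Cs a \<and> atom_vars a \<noteq> {}"
proof -
  have "\<Phi> ! j \<in> set \<Phi>"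
    using assms(1) by simp
  then have "cq_over Rs ar Cs (\<Phi> ! j)" and "pleasant_cq (\<Phi> ! j)"
    using ucq pleasant by (simp_all add: ucq_over_def pleasant_ucq_def)
  then show ?thesis
    using assms(2) by (simp add: cq_over_def pleasant_cq_def)
qed

lemma disjunct_vars_disjoint:
  assumes "i < length \<Phi>" and "j < length \<Phi>" and "i \<noteq> j" and "v \<in> cq_vars (\<Phi> ! i)"
  shows "v \<notin> cq_vars (\<Phi> ! j)"
proof -
  have "cq_vars (\<Phi> ! i) \<inter> cq_vars (\<Phi> ! j) = {}"
    using ucq assms(1-3) by (simp add: ucq_over_def)
  then show ?thesis
    using assms(4) by blast
qed

lemma venus_hom_in_hom_set:
  fixes D :: "('r, 'c, 'e) rstruct"
  shows "venus_hom \<Phi> \<in> hom_set (cqOf \<Phi>) (marsify Rs ar Cs D)"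
  unfolding hom_set_cqOf_marsify_iff
proof (intro conjI allI impI ballI)
  show "venus_hom \<Phi> \<in> cq_vars (cqOf \<Phi>) \<rightarrow>\<^sub>E Old ` dom D \<union> {MarsE, VenusE}"
    by (auto simp: venus_hom_def)
  fix j A ts assume j: "j < length \<Phi>" and a: "(A, ts) \<in> \<Phi> ! j"
  then show "(Rel A, map (eval_trm (pcint (cint D)) (venus_hom \<Phi>) \<circ> lift_trm) ts)
      \<in> facts (marsify Rs ar Cs D)"
    using disjunct_atom[OF j a] in_cq_varsI[OF a]
    by (intro Rel_venus_in_facts_marsify) (auto simp: venus_hom_Inl)
qed (simp_all add: venus_hom_Inr venus_hom_Inl)

lemma mars_hom_in_hom_set:
  fixes D :: "('r, 'c, 'e) rstruct"
  assumes k: "k < length \<Phi>" and g: "g \<in> hom_set (\<Phi> ! k) D"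
  shows "mars_hom \<Phi> k g \<in> hom_set (cqOf \<Phi>) (marsify Rs ar Cs D)"
  unfolding hom_set_cqOf_marsify_iff
proof (intro conjI allI impI ballI)
  have g_Pi: "g \<in> cq_vars (\<Phi> ! k) \<rightarrow>\<^sub>E dom D"
    using g by (simp add: hom_set_def)
  then show "mars_hom \<Phi> k g \<in> cq_vars (cqOf \<Phi>) \<rightarrow>\<^sub>E Old ` dom D \<union> {MarsE, VenusE}"
    by (auto simp: mars_hom_def PiE_iff split: sum.split)
  fix j assume j: "j < length \<Phi>"
  {
    fix y assume y: "y \<in> cq_vars (\<Phi> ! j)"
    show "mars_hom \<Phi> k g (Inr j) = VenusE \<and> mars_hom \<Phi> k g (Inl y) = VenusE \<or>
        mars_hom \<Phi> k g (Inr j) = MarsE \<and> mars_hom \<Phi> k g (Inl y) \<in> Old ` dom D"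
    proof (cases "j = k")
      case True
      then show ?thesis
        using y j g_Pi by (auto simp: mars_hom_Inr mars_hom_Inl)
    next
      case False
      then show ?thesis
        using disjunct_vars_disjoint[OF j k False y] y j
        by (simp add: mars_hom_Inr mars_hom_Inl)
    qed
  }
  fix A ts assume a: "(A, ts) \<in> \<Phi> ! j"
  show "(Rel A, map (eval_trm (pcint (cint D)) (mars_hom \<Phi> k g) \<circ> lift_trm) ts)
      \<in> facts (marsify Rs ar Cs D)"
  proof (cases "j = k")
    case True
    have "eval_atom (cint D) g (A, ts) \<in> facts D"
      using g a True by (simp add: hom_set_def)
    moreover have "\<forall>v\<in>atom_vars (A, ts). mars_hom \<Phi> k g (Inl v) = Old (g v)"
      using in_cq_varsI[OF a] True j by (simp add: mars_hom_Inl)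
    ultimately show ?thesis
      by (simp add: Rel_lift_in_facts_marsify_iff[where g = g])
  next
    case False
    have "\<forall>v\<in>atom_vars (A, ts). mars_hom \<Phi> k g (Inl v) = VenusE"
      using in_cq_varsI[OF a] disjunct_vars_disjoint[OF j k False] j
      by (auto simp: mars_hom_Inl)
    then show ?thesis
      using disjunct_atom[OF j a] by (intro Rel_venus_in_facts_marsify) simp_all
  qed
qed (simp_all add: mars_hom_Inr)

lemma hom_set_cqOf_marsify:
  fixes D :: "('r, 'c, 'e) rstruct"
  shows "hom_set (cqOf \<Phi>) (marsify Rs ar Cs D)
    = insert (venus_hom \<Phi>) (\<Union>k<length \<Phi>. mars_hom \<Phi> k ` hom_set (\<Phi> ! k) D)"
proof
  show "hom_set (cqOf \<Phi>) (marsify Rs ar Cs D)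
      \<subseteq> insert (venus_hom \<Phi>) (\<Union>k<length \<Phi>. mars_hom \<Phi> k ` hom_set (\<Phi> ! k) D)"
  proof
    fix h assume h: "h \<in> hom_set (cqOf \<Phi>) (marsify Rs ar Cs D)"
    show "h \<in> insert (venus_hom \<Phi>) (\<Union>k<length \<Phi>. mars_hom \<Phi> k ` hom_set (\<Phi> ! k) D)"
    proof (cases "\<exists>k<length \<Phi>. h (Inr k) = MarsE")
      case True
      then show ?thesis
        using hom_with_mars_eq_mars_hom[OF h] by blast
    next
      case False
      then show ?thesis
        using hom_without_mars_eq_venus_hom[OF h] by blast
    qed
  qed
  show "insert (venus_hom \<Phi>) (\<Union>k<length \<Phi>. mars_hom \<Phi> k ` hom_set (\<Phi> ! k) D)
      \<subseteq> hom_set (cqOf \<Phi>) (marsify Rs ar Cs D)"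
    using venus_hom_in_hom_set mars_hom_in_hom_set by blast
qed

lemma hcount_cqOf_marsify:
  fixes D :: "('r, 'c, 'e) rstruct"
  assumes D: "struct_over Rs ar Cs D"
  shows "hcount (cqOf \<Phi>) (marsify Rs ar Cs D) = Suc (ucount \<Phi> D)"
proof -
  let ?H = "\<lambda>k. mars_hom \<Phi> k ` hom_set (\<Phi> ! k) D"
  have finite: "finite (hom_set (\<Phi> ! k) D)" if "k < length \<Phi>" for k
    using ucq D that
    by (intro finite_hom_set finite_cq_vars) (auto simp: ucq_over_def struct_over_def)
  have inj: "inj_on (mars_hom \<Phi> k) (hom_set (\<Phi> ! k) D)" if "k < length \<Phi>" for k
    using inj_on_mars_hom[OF that] by (rule inj_on_subset) (auto simp: hom_set_def)
  have disjoint: "?H i \<inter> ?H j = {}" if "i < length \<Phi>" and "j < length \<Phi>" and "i \<noteq> j" for i j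
    using that by (auto dest: fun_cong[where x = "Inr i"] simp: mars_hom_Inr)
  have venus_new: "venus_hom \<Phi> \<notin> (\<Union>k<length \<Phi>. ?H k)"
  proof
    assume "venus_hom \<Phi> \<in> (\<Union>k<length \<Phi>. ?H k)"
    then obtain k and g :: "'v \<Rightarrow> 'e"
      where k: "k < length \<Phi>" and "venus_hom \<Phi> = mars_hom \<Phi> k g"
      by blast
    then have "venus_hom \<Phi> (Inr k) = mars_hom \<Phi> k g (Inr k)"
      by simp
    with k show False
      by (simp add: venus_hom_Inr mars_hom_Inr)
  qed
  have "hcount (cqOf \<Phi>) (marsify Rs ar Cs D) = Suc (card (\<Union>k<length \<Phi>. ?H k))"
    using finite venus_new by (simp add: hcount_eq_card_hom_set hom_set_cqOf_marsify)
  also have "card (\<Union>k<length \<Phi>. ?H k) = (\<Sum>k<length \<Phi>. card (?H k))"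
    using finite disjoint by (intro card_UN_disjoint) auto
  also have "\<dots> = (\<Sum>k<length \<Phi>. hcount (\<Phi> ! k) D)"
    using inj by (simp add: card_image hcount_eq_card_hom_set)
  also have "\<dots> = ucount \<Phi> D"
    by (simp add: ucount_def sum_list_sum_nth atLeast0LessThan)
  finally show ?thesis .
qed

end

theorem mainTheorem11:
  fixes Rs :: "'r set" and ar :: "'r \<Rightarrow> nat" and Cs :: "'c set"
    and \<Phi>s \<Phi>b :: "('r, 'v, 'c) ucq" and D :: "('r, 'c, 'e) rstruct"
  assumes "finite Rs" and "finite Cs"
    and "ucq_over Rs ar Cs \<Phi>s" and "pleasant_ucq \<Phi>s"
    and "ucq_over Rs ar Cs \<Phi>b" and "pleasant_ucq \<Phi>b"
    and "struct_over Rs ar Cs D"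
    and "ucount \<Phi>s D > ucount \<Phi>b D"
  shows "hcount (cqOf \<Phi>s) (marsify Rs ar Cs D) > hcount (cqOf \<Phi>b) (marsify Rs ar Cs D)
       \<and> \<not> le_forall TYPE('e pelem) Rs ar Cs (cqOf \<Phi>s) (cqOf \<Phi>b)"
proof -
  have more_homs:
    "hcount (cqOf \<Phi>s) (marsify Rs ar Cs D) > hcount (cqOf \<Phi>b) (marsify Rs ar Cs D)"
    using hcount_cqOf_marsify[OF assms(3,4,7)] hcount_cqOf_marsify[OF assms(5,6,7)] assms(8)
    by simp
  then have "\<not> le_forall TYPE('e pelem) Rs ar Cs (cqOf \<Phi>s) (cqOf \<Phi>b)"
    using struct_over_marsify[OF assms(7)] unfolding le_forall_def by (auto simp: not_le)
  with more_homs show ?thesis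
    by blast
qed

end
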